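(* Let $n\ge1$, let $B=\{\cos(\theta)|0\rangle+\sin(\theta)|1\rangle\mid0\le\theta<2\pi\}$ and $\mathcal S=B^{\otimes n}=\{|b_1\rangle\otimes\cdots\otimes|b_n\rangle\mid|b_j\rangle\in B\}$. (i) There exists a randomization procedure for $\mathcal S$ whose probability distribution has Shannon entropy $H(p_1,\dots,p_N)=n$. (ii) Every randomization procedure for $\mathcal S$ (using any number of ancilla qubits) has $H(p_1,\dots,p_N)\ge n$.
   Context: $\mathcal{H}_{2^k}$ denotes the Hilbert space of $k$ qubits; $H(p_1,\dots,p_N)=-\sum_ip_i\log_2p_i$. A randomization procedure for a set $\mathcal S\subseteq\mathcal H_{2^n}$ of pure $n$-qubit states consists of an integer $m\ge n$, probabilities $p_1,\dots,p_N\ge0$ with $\sum_ip_i=1$, unitaries $U_1,\dots,U_N$ on $\mathcal H_{2^m}$, an $(m-n)$-qubit density matrix $\rho_a$ (ancilla) and an $m$-qubit density matrix $\rho_0$ such that $\sum_{i=1}^Np_iU_i(|\phi\rangle\langle\phi|\otimes\rho_a)U_i^\dagger=\rho_0$ for every $|\phi\rangle\in\mathcal S$ (the entropy generated is $H(p_1,\dots,p_N)$). *)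

theory Defs
  imports "HOL-Analysis.Analysis" "Jordan_Normal_Form.Matrix" "Jordan_Normal_Form.Schur_Decomposition"
begin

text \<open>A k-qubit (column) vector lives in carrier_vec (2^k); operators in carrier_mat (2^k) (2^k).
  Basis index i of a tensor product u (x) v is (i div dim v, i mod dim v), i.e. first factor most significant.\<close>

definition kron_vec :: "complex vec \<Rightarrow> complex vec \<Rightarrow> complex vec" where
  "kron_vec u v = vec (dim_vec u * dim_vec v) (\<lambda>i. u $ (i div dim_vec v) * v $ (i mod dim_vec v))"

definition kron_mat :: "complex mat \<Rightarrow> complex mat \<Rightarrow> complex mat" where
  "kron_mat A B = mat (dim_row A * dim_row B) (dim_col A * dim_col B)
     (\<lambda>(i,j). A $$ (i div dim_row B, j div dim_col B) * B $$ (i mod dim_row B, j mod dim_col B))"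

fun tensor_list :: "complex vec list \<Rightarrow> complex vec" where
  "tensor_list [] = vec 1 (\<lambda>_. 1)"
| "tensor_list (v # vs) = kron_vec v (tensor_list vs)"

definition proj :: "complex vec \<Rightarrow> complex mat" where
  "proj v = mat (dim_vec v) (dim_vec v) (\<lambda>(i,j). v $ i * cnj (v $ j))"

definition mat_trace :: "complex mat \<Rightarrow> complex" where
  "mat_trace A = (\<Sum>i<dim_row A. A $$ (i,i))"

definition unitary_op :: "nat \<Rightarrow> complex mat \<Rightarrow> bool" where
  "unitary_op k U \<longleftrightarrow> U \<in> carrier_mat (2^k) (2^k) \<and> mat_adjoint U * U = 1\<^sub>m (2^k)"

definition density_mat :: "nat \<Rightarrow> complex mat \<Rightarrow> bool" where
  "density_mat k \<rho> \<longleftrightarrow> \<rho> \<in> carrier_mat (2^k) (2^k) \<and> mat_adjoint \<rho> = \<rho>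
     \<and> (\<forall>v \<in> carrier_vec (2^k). conjugate v \<bullet> (\<rho> *\<^sub>v v) \<in> \<real> \<and> Re (conjugate v \<bullet> (\<rho> *\<^sub>v v)) \<ge> 0)
     \<and> mat_trace \<rho> = 1"

definition shannon :: "nat \<Rightarrow> (nat \<Rightarrow> real) \<Rightarrow> real" where
  "shannon N p = - (\<Sum>i<N. if p i = 0 then 0 else p i * log 2 (p i))"

definition mixture :: "nat \<Rightarrow> nat \<Rightarrow> (nat \<Rightarrow> real) \<Rightarrow> (nat \<Rightarrow> complex mat) \<Rightarrow> complex mat \<Rightarrow> complex mat" where
  "mixture d N p U X = mat d d (\<lambda>rc. \<Sum>i<N. complex_of_real (p i) * (U i * X * mat_adjoint (U i)) $$ rc)"

definition randomization_procedure ::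
  "nat \<Rightarrow> complex vec set \<Rightarrow> nat \<Rightarrow> nat \<Rightarrow> (nat \<Rightarrow> real) \<Rightarrow> (nat \<Rightarrow> complex mat)
     \<Rightarrow> complex mat \<Rightarrow> complex mat \<Rightarrow> bool" where
  "randomization_procedure n S m N p U \<rho>a \<rho>0 \<longleftrightarrow>
     m \<ge> n \<and> (\<forall>i<N. p i \<ge> 0) \<and> (\<Sum>i<N. p i) = 1 \<and> (\<forall>i<N. unitary_op m (U i))
     \<and> density_mat (m - n) \<rho>a \<and> density_mat m \<rho>0
     \<and> (\<forall>\<phi>\<in>S. mixture (2^m) N p U (kron_mat (proj \<phi>) \<rho>a) = \<rho>0)"

definition B_states :: "complex vec set" where
  "B_states = {vec_of_list [complex_of_real (cos \<theta>), complex_of_real (sin \<theta>)] | \<theta>. 0 \<le> \<theta> \<and> \<theta> < 2 * pi}"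

definition B_tensor :: "nat \<Rightarrow> complex vec set" where
  "B_tensor n = {tensor_list bs | bs. length bs = n \<and> set bs \<subseteq> B_states}"

end

theory Submission
  imports Defs
begin

text \<open>
  (i) Applying to each qubit independently either the identity or the rotation by \<open>\<pi>/2\<close>, each
  with probability \<open>1/2\<close>, maps a real qubit state \<open>|b\<rangle>\<langle>b|\<close> to
  \<open>(|b\<rangle>\<langle>b| + |b\<^sup>\<bottom>\<rangle>\<langle>b\<^sup>\<bottom>|)/2 = I/2\<close>. On product states this is a mixture of \<open>2\<^sup>n\<close>
  equiprobable unitaries with the maximally mixed output, so its entropy is \<open>n\<close>.

  (ii) The computational basis states \<open>|x\<rangle>\<close> lie in \<open>S\<close>. Let \<open>\<lambda>\<close> be the largest eigenvalue of the
  ancilla \<open>\<rho>\<^sub>a\<close>. Averaging the procedure over all \<open>x\<close> gives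
  \<open>2\<^sup>n \<rho>\<^sub>0 = \<Sum>\<^sub>j p\<^sub>j U\<^sub>j (I \<otimes> \<rho>\<^sub>a) U\<^sub>j\<^sup>\<dagger> \<le> \<lambda> I\<close>, while the \<open>i\<close>-th term alone gives
  \<open>\<rho>\<^sub>0 \<ge> p\<^sub>i U\<^sub>i (|0\<rangle>\<langle>0| \<otimes> \<rho>\<^sub>a) U\<^sub>i\<^sup>\<dagger>\<close>, an operator with largest eigenvalue \<open>p\<^sub>i \<lambda>\<close>. Hence
  every \<open>p\<^sub>i \<le> 2\<^sup>-\<^sup>n\<close>, and \<open>H(p) \<ge> -log\<^sub>2 max\<^sub>i p\<^sub>i \<ge> n\<close>.
\<close>

section \<open>Kronecker products and projectors\<close>

lemma mult_add_less_mult: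
  fixes i j a b :: nat
  assumes "i < a" "j < b"
  shows "i*b + j < a*b"
proof -
  have "i*b + j < Suc i * b" using assms by simp
  also have "\<dots> \<le> a*b" using assms by (intro mult_le_mono1) simp
  finally show ?thesis .
qed

lemma sum_mult_div_mod:
  fixes f :: "nat \<Rightarrow> nat \<Rightarrow> 'a::comm_monoid_add"
  shows "(\<Sum>k<a*b. f (k div b) (k mod b)) = (\<Sum>i<a. \<Sum>j<b. f i j)"
proof -
  have "(\<Sum>k<a*b. f (k div b) (k mod b)) = (\<Sum>(i,j)\<in>{..<a}\<times>{..<b}. f i j)"
    by (rule sum.reindex_bij_witness[of _ "\<lambda>(i,j). i*b + j" "\<lambda>k. (k div b, k mod b)"])
      (auto simp: mult_add_less_mult less_mult_imp_div_less dest: gr_implies_not0)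
  then show ?thesis by (simp add: sum.cartesian_product)
qed

lemma sum_mult_split:
  fixes g :: "nat \<Rightarrow> 'a::comm_monoid_add"
  shows "(\<Sum>k<a*b. g k) = (\<Sum>i<a. \<Sum>j<b. g (i*b + j))"
  using sum_mult_div_mod[where f = "\<lambda>i j. g (i*b + j)" and a = a and b = b] by simp

lemma div_mod_less_mult:
  fixes i a b :: nat
  assumes "i < a * b"
  shows "i div b < a" "i mod b < b"
  using assms by (auto simp: less_mult_imp_div_less dest: gr_implies_not0)

lemma index_mult_mat_sum:
  assumes "A \<in> carrier_mat a b" "C \<in> carrier_mat b c" "i < a" "j < c"
  shows "(A * C) $$ (i,j) = (\<Sum>k<b. A $$ (i,k) * C $$ (k,j))"
  using assms by (auto simp: scalar_prod_def atLeast0LessThan intro!: sum.cong)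

lemma mat_adjoint_dim [simp]:
  "dim_row (mat_adjoint A) = dim_col A" "dim_col (mat_adjoint A) = dim_row A"
  by (auto simp: mat_adjoint_def)

lemma mat_adjoint_index [simp]:
  "i < dim_col A \<Longrightarrow> j < dim_row A \<Longrightarrow> mat_adjoint A $$ (i,j) = cnj (A $$ (j,i))"
  by (auto simp: mat_adjoint_def mat_of_rows_index)

lemma mat_adjoint_carrier [simp]: "A \<in> carrier_mat a b \<Longrightarrow> mat_adjoint A \<in> carrier_mat b a"
  unfolding carrier_mat_def by simp

lemma mat_adjoint_adjoint [simp]: "mat_adjoint (mat_adjoint (A :: complex mat)) = A"
  by (rule eq_matI) auto

lemma mat_adjoint_one [simp]: "mat_adjoint (1\<^sub>m k :: complex mat) = 1\<^sub>m k"
  by (rule eq_matI) auto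

lemma kron_vec_dim [simp]: "dim_vec (kron_vec u v) = dim_vec u * dim_vec v"
  by (simp add: kron_vec_def)

lemma kron_vec_index [simp]:
  "i < dim_vec u * dim_vec v \<Longrightarrow> kron_vec u v $ i = u $ (i div dim_vec v) * v $ (i mod dim_vec v)"
  by (simp add: kron_vec_def)

lemma kron_vec_carrier [simp]:
  "u \<in> carrier_vec a \<Longrightarrow> v \<in> carrier_vec b \<Longrightarrow> kron_vec u v \<in> carrier_vec (a*b)"
  by (rule carrier_vecI) (auto dest: carrier_vecD)

lemma kron_vec_unit_vec:
  assumes "i < a" "j < b"
  shows "kron_vec (unit_vec a i) (unit_vec b j) = unit_vec (a*b) (i*b + j)"
proof (rule eq_vecI)
  fix r assume "r < dim_vec (unit_vec (a*b) (i*b + j))"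
  then have r: "r < a*b" by simp
  have "(r div b = i \<and> r mod b = j) \<longleftrightarrow> r = i*b + j"
    using assms by auto
  then show "kron_vec (unit_vec a i) (unit_vec b j) $ r = unit_vec (a*b) (i*b + j) $ r"
    using r by (auto simp: unit_vec_def div_mod_less_mult)
qed simp

lemma kron_mat_dim [simp]:
  "dim_row (kron_mat A B) = dim_row A * dim_row B" "dim_col (kron_mat A B) = dim_col A * dim_col B"
  by (simp_all add: kron_mat_def)

lemma kron_mat_index [simp]:
  "i < dim_row A * dim_row B \<Longrightarrow> j < dim_col A * dim_col B \<Longrightarrow>
   kron_mat A B $$ (i,j) = A $$ (i div dim_row B, j div dim_col B) * B $$ (i mod dim_row B, j mod dim_col B)"
  by (simp add: kron_mat_def)

lemma kron_mat_carrier [simp]: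
  "A \<in> carrier_mat a1 a2 \<Longrightarrow> B \<in> carrier_mat b1 b2 \<Longrightarrow> kron_mat A B \<in> carrier_mat (a1*b1) (a2*b2)"
  by (rule carrier_matI) (auto dest: carrier_matD)

lemma kron_mat_mult:
  assumes A: "A \<in> carrier_mat a1 a2" and B: "B \<in> carrier_mat b1 b2"
    and C: "C \<in> carrier_mat a2 a3" and D: "D \<in> carrier_mat b2 b3"
  shows "kron_mat A B * kron_mat C D = kron_mat (A * C) (B * D)"
proof (rule eq_matI)
  fix i j assume "i < dim_row (kron_mat (A * C) (B * D))" "j < dim_col (kron_mat (A * C) (B * D))"
  then have i: "i < a1 * b1" and j: "j < a3 * b3" using A B C D by auto
  note ij = div_mod_less_mult[OF i] div_mod_less_mult[OF j]
  have "(kron_mat A B * kron_mat C D) $$ (i,j) = (\<Sum>k<a2*b2. kron_mat A B $$ (i,k) * kron_mat C D $$ (k,j))"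
    using A B C D i j by (intro index_mult_mat_sum) auto
  also have "\<dots> = (\<Sum>k<a2*b2. A $$ (i div b1, k div b2) * C $$ (k div b2, j div b3)
                  * (B $$ (i mod b1, k mod b2) * D $$ (k mod b2, j mod b3)))"
    using A B C D i j by (intro sum.cong) (auto simp: mult_ac)
  also have "\<dots> = (\<Sum>k<a2. \<Sum>l<b2. A $$ (i div b1, k) * C $$ (k, j div b3)
                                 * (B $$ (i mod b1, l) * D $$ (l, j mod b3)))"
    by (rule sum_mult_div_mod[where f = "\<lambda>k l. A $$ (i div b1, k) * C $$ (k, j div b3)
                                 * (B $$ (i mod b1, l) * D $$ (l, j mod b3))"])
  also have "\<dots> = (\<Sum>k<a2. A $$ (i div b1, k) * C $$ (k, j div b3))
                 * (\<Sum>l<b2. B $$ (i mod b1, l) * D $$ (l, j mod b3))"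
    by (simp add: sum_product)
  also have "\<dots> = (A * C) $$ (i div b1, j div b3) * (B * D) $$ (i mod b1, j mod b3)"
    by (simp only: index_mult_mat_sum[OF A C ij(1,3)] index_mult_mat_sum[OF B D ij(2,4)])
  also have "\<dots> = kron_mat (A * C) (B * D) $$ (i,j)"
    using A B C D i j by simp
  finally show "(kron_mat A B * kron_mat C D) $$ (i,j) = kron_mat (A * C) (B * D) $$ (i,j)" .
qed (use A B C D in auto)

lemma kron_mat_adjoint:
  assumes "A \<in> carrier_mat a1 a2" "B \<in> carrier_mat b1 b2"
  shows "mat_adjoint (kron_mat A B) = kron_mat (mat_adjoint A) (mat_adjoint B)"
  using assms by (intro eq_matI) (auto simp: div_mod_less_mult)

lemma kron_mat_one: "kron_mat (1\<^sub>m a) (1\<^sub>m b) = 1\<^sub>m (a*b)"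
proof (rule eq_matI)
  fix i j assume "i < dim_row (1\<^sub>m (a*b))" "j < dim_col (1\<^sub>m (a*b))"
  then have "i < a*b" "j < a*b" by auto
  moreover have "(i div b = j div b \<and> i mod b = j mod b) \<longleftrightarrow> i = j"
    by (metis div_mult_mod_eq)
  ultimately show "kron_mat (1\<^sub>m a) (1\<^sub>m b) $$ (i,j) = 1\<^sub>m (a*b) $$ (i,j)"
    by (auto simp: div_mod_less_mult)
qed auto

lemma kron_mat_conjugate:
  assumes A: "A \<in> carrier_mat a a" and B: "B \<in> carrier_mat b b"
    and V: "V \<in> carrier_mat a a" and W: "W \<in> carrier_mat b b"
  shows "kron_mat V W * kron_mat A B * mat_adjoint (kron_mat V W)
       = kron_mat (V * A * mat_adjoint V) (W * B * mat_adjoint W)"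
  using assms by (simp add: kron_mat_mult kron_mat_adjoint[OF V W]
      kron_mat_mult[of "V * A" a a "W * B" b b _ a _ b])

lemma proj_dim [simp]: "dim_row (proj v) = dim_vec v" "dim_col (proj v) = dim_vec v"
  by (simp_all add: proj_def)

lemma proj_index [simp]: "i < dim_vec v \<Longrightarrow> j < dim_vec v \<Longrightarrow> proj v $$ (i,j) = v $ i * cnj (v $ j)"
  by (simp add: proj_def)

lemma proj_carrier [simp]: "v \<in> carrier_vec k \<Longrightarrow> proj v \<in> carrier_mat k k"
  by (rule carrier_matI) (auto dest: carrier_vecD)

lemma proj_kron_vec: "proj (kron_vec u v) = kron_mat (proj u) (proj v)"
  by (rule eq_matI) (auto simp: div_mod_less_mult)

lemma proj_conjugate:
  fixes U :: "complex mat"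
  assumes U: "U \<in> carrier_mat k k" and v: "v \<in> carrier_vec k"
  shows "U * proj v * mat_adjoint U = proj (U *\<^sub>v v)"
proof (rule eq_matI)
  fix i j assume "i < dim_row (proj (U *\<^sub>v v))" "j < dim_col (proj (U *\<^sub>v v))"
  then have i: "i < k" and j: "j < k" using U by simp_all
  have Uv: "(U *\<^sub>v v) $ i = (\<Sum>l<k. U $$ (i,l) * v $ l)" if "i < k" for i
    using U v that by (simp add: scalar_prod_def atLeast0LessThan)
  have UP: "U * proj v \<in> carrier_mat k k"
    using U v by (meson mult_carrier_mat proj_carrier)
  have "(U * proj v * mat_adjoint U) $$ (i,j) = (\<Sum>l<k. (U * proj v) $$ (i,l) * mat_adjoint U $$ (l,j))"
    by (rule index_mult_mat_sum[OF UP mat_adjoint_carrier[OF U] i j])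
  also have "\<dots> = (\<Sum>l<k. (\<Sum>m<k. U $$ (i,m) * (v $ m * cnj (v $ l))) * cnj (U $$ (j,l)))"
  proof (intro sum.cong refl)
    fix l assume "l \<in> {..<k}"
    then have l: "l < k" by simp
    show "(U * proj v) $$ (i,l) * mat_adjoint U $$ (l,j)
        = (\<Sum>m<k. U $$ (i,m) * (v $ m * cnj (v $ l))) * cnj (U $$ (j,l))"
      unfolding index_mult_mat_sum[OF U proj_carrier[OF v] i l] using U v j l by simp
  qed
  also have "\<dots> = (\<Sum>l<k. \<Sum>m<k. (U $$ (i,m) * v $ m) * cnj (U $$ (j,l) * v $ l))"
    by (simp add: sum_distrib_left sum_distrib_right mult_ac)
  also have "\<dots> = (\<Sum>m<k. \<Sum>l<k. (U $$ (i,m) * v $ m) * cnj (U $$ (j,l) * v $ l))"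
    by (rule sum.swap)
  also have "\<dots> = (U *\<^sub>v v) $ i * cnj ((U *\<^sub>v v) $ j)"
    by (simp only: Uv[OF i] Uv[OF j] cnj_sum sum_product)
  also have "\<dots> = proj (U *\<^sub>v v) $$ (i,j)"
    using U i j by simp
  finally show "(U * proj v * mat_adjoint U) $$ (i,j) = proj (U *\<^sub>v v) $$ (i,j)" .
qed (use U v in simp_all)

section \<open>Quadratic forms\<close>

abbreviation qform :: "complex mat \<Rightarrow> complex vec \<Rightarrow> complex" where
  "qform A v \<equiv> conjugate v \<bullet> (A *\<^sub>v v)"

definition vec_norm2 :: "complex vec \<Rightarrow> real" where
  "vec_norm2 v = (\<Sum>i<dim_vec v. (cmod (v $ i))\<^sup>2)"

lemma vec_norm2_nonneg: "vec_norm2 v \<ge> 0"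
  by (simp add: vec_norm2_def sum_nonneg)

lemma vec_norm2_eq_0D: "vec_norm2 v = 0 \<Longrightarrow> v = 0\<^sub>v (dim_vec v)"
  by (intro eq_vecI) (simp_all add: vec_norm2_def sum_nonneg_eq_0_iff)

lemma conjugate_scalar_prod_self: "conjugate v \<bullet> v = complex_of_real (vec_norm2 v)"
proof -
  have "conjugate v \<bullet> v = (\<Sum>i<dim_vec v. v $ i * cnj (v $ i))"
    by (simp add: scalar_prod_def atLeast0LessThan mult.commute)
  then show ?thesis
    by (simp add: vec_norm2_def flip: complex_norm_square)
qed

lemma qform_expand:
  assumes "A \<in> carrier_mat k k" "v \<in> carrier_vec k"
  shows "qform A v = (\<Sum>r<k. \<Sum>c<k. cnj (v $ r) * A $$ (r,c) * v $ c)"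
  using assms by (auto simp: scalar_prod_def atLeast0LessThan sum_distrib_left mult.assoc intro!: sum.cong)

lemma conjugate_scalar_prod_adjoint:
  fixes A :: "complex mat"
  assumes A: "A \<in> carrier_mat a b" and v: "v \<in> carrier_vec a" and w: "w \<in> carrier_vec b"
  shows "conjugate v \<bullet> (A *\<^sub>v w) = conjugate (mat_adjoint A *\<^sub>v v) \<bullet> w"
proof -
  have "transpose_mat A *\<^sub>v conjugate v = conjugate (mat_adjoint A *\<^sub>v v)"
    using A v by (intro eq_vecI) (simp_all add: scalar_prod_def cnj_sum mult.commute)
  then show ?thesis
    using transpose_vec_mult_scalar[OF A w, of "conjugate v"] v by simp
qed

lemma unitary_cancel_left:
  fixes U :: "complex mat"
  assumes U: "U \<in> carrier_mat k k" "mat_adjoint U * U = 1\<^sub>m k" and w: "w \<in> carrier_vec k"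
  shows "mat_adjoint U *\<^sub>v (U *\<^sub>v w) = w"
  using assoc_mult_mat_vec[OF mat_adjoint_carrier[OF U(1)] U(1) w, symmetric] U w by simp

lemma unitary_mult_adjoint:
  fixes U :: "complex mat"
  assumes "U \<in> carrier_mat k k" "mat_adjoint U * U = 1\<^sub>m k"
  shows "U * mat_adjoint U = 1\<^sub>m k"
  using mat_mult_left_right_inverse[OF mat_adjoint_carrier[OF assms(1)] assms] .

lemma vec_norm2_unitary:
  fixes U :: "complex mat"
  assumes U: "U \<in> carrier_mat k k" "mat_adjoint U * U = 1\<^sub>m k" and w: "w \<in> carrier_vec k"
  shows "vec_norm2 (U *\<^sub>v w) = vec_norm2 w"
proof -
  have "conjugate (U *\<^sub>v w) \<bullet> (U *\<^sub>v w) = conjugate (mat_adjoint U *\<^sub>v (U *\<^sub>v w)) \<bullet> w"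
    by (rule conjugate_scalar_prod_adjoint[OF U(1) _ w]) (use U w in simp)
  then show ?thesis
    unfolding unitary_cancel_left[OF U w] conjugate_scalar_prod_self by simp
qed

lemma qform_conjugate:
  fixes U Y :: "complex mat"
  assumes U: "U \<in> carrier_mat k k" and Y: "Y \<in> carrier_mat k k" and v: "v \<in> carrier_vec k"
  shows "qform (U * Y * mat_adjoint U) v = qform Y (mat_adjoint U *\<^sub>v v)"
proof -
  have Uv: "mat_adjoint U *\<^sub>v v \<in> carrier_vec k"
    using mult_mat_vec_carrier[OF mat_adjoint_carrier[OF U] v] .
  have "(U * Y * mat_adjoint U) *\<^sub>v v = (U * Y) *\<^sub>v (mat_adjoint U *\<^sub>v v)"
    by (rule assoc_mult_mat_vec) (use U Y v in auto)
  also have "\<dots> = U *\<^sub>v (Y *\<^sub>v (mat_adjoint U *\<^sub>v v))"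
    by (rule assoc_mult_mat_vec[OF U Y Uv])
  finally show ?thesis
    by (simp only: conjugate_scalar_prod_adjoint[OF U v mult_mat_vec_carrier[OF Y Uv]])
qed

lemma mixture_carrier [simp]: "mixture k N p U X \<in> carrier_mat k k"
  unfolding mixture_def by (rule carrier_matI) simp_all

lemma mixture_index:
  "i < k \<Longrightarrow> j < k \<Longrightarrow>
   mixture k N p U X $$ (i,j) = (\<Sum>l<N. complex_of_real (p l) * (U l * X * mat_adjoint (U l)) $$ (i,j))"
  by (simp add: mixture_def)

lemma qform_mixture:
  fixes Y :: "complex mat"
  assumes Y: "Y \<in> carrier_mat k k" and U: "\<And>i. i < N \<Longrightarrow> U i \<in> carrier_mat k k"
    and v: "v \<in> carrier_vec k"
  shows "qform (mixture k N p U Y) v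
       = (\<Sum>i<N. complex_of_real (p i) * qform Y (mat_adjoint (U i) *\<^sub>v v))"
proof -
  have UYU: "U i * Y * mat_adjoint (U i) \<in> carrier_mat k k" if "i < N" for i
    using U[OF that] Y by (meson mult_carrier_mat mat_adjoint_carrier)
  have "qform (mixture k N p U Y) v = (\<Sum>r<k. \<Sum>c<k. cnj (v $ r) * mixture k N p U Y $$ (r,c) * v $ c)"
    by (rule qform_expand[OF mixture_carrier v])
  also have "\<dots> = (\<Sum>r<k. \<Sum>c<k. \<Sum>i<N. complex_of_real (p i)
           * (cnj (v $ r) * (U i * Y * mat_adjoint (U i)) $$ (r,c) * v $ c))"
    by (intro sum.cong refl) (simp add: mixture_def sum_distrib_left sum_distrib_right mult_ac)
  also have "\<dots> = (\<Sum>i<N. complex_of_real (p i)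
      * (\<Sum>r<k. \<Sum>c<k. cnj (v $ r) * (U i * Y * mat_adjoint (U i)) $$ (r,c) * v $ c))"
    by (simp only: sum_distrib_left sum.swap[of _ "{..<N}"])
  also have "\<dots> = (\<Sum>i<N. complex_of_real (p i) * qform Y (mat_adjoint (U i) *\<^sub>v v))"
    by (intro sum.cong refl) (simp add: qform_expand[OF UYU v, symmetric] qform_conjugate[OF U Y v])
  finally show ?thesis .
qed

lemma Re_qform_le_sum_cmod:
  fixes R :: "complex mat"
  assumes R: "R \<in> carrier_mat k k" and u: "u \<in> carrier_vec k"
  shows "Re (qform R u) \<le> (\<Sum>r<k. \<Sum>c<k. cmod (R $$ (r,c))) * vec_norm2 u"
proof -
  have entry_le: "cmod (u $ r) * cmod (u $ c) \<le> vec_norm2 u" if "r < k" "c < k" for r c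
  proof -
    have sq: "(cmod (u $ i))\<^sup>2 \<le> vec_norm2 u" if "i < k" for i
      unfolding vec_norm2_def using u that by (intro member_le_sum) auto
    have "2 * (cmod (u $ r) * cmod (u $ c)) \<le> (cmod (u $ r))\<^sup>2 + (cmod (u $ c))\<^sup>2"
      using sum_squares_bound[of "cmod (u $ r)" "cmod (u $ c)"] by (simp add: mult.assoc)
    then show ?thesis using sq[OF \<open>r < k\<close>] sq[OF \<open>c < k\<close>] by linarith
  qed
  have "Re (qform R u) \<le> cmod (\<Sum>r<k. \<Sum>c<k. cnj (u $ r) * R $$ (r,c) * u $ c)"
    unfolding qform_expand[OF R u] by (rule complex_Re_le_cmod)
  also have "\<dots> \<le> (\<Sum>r<k. \<Sum>c<k. cmod (R $$ (r,c)) * (cmod (u $ r) * cmod (u $ c)))"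
    by (rule order_trans[OF norm_sum sum_mono[OF order_trans[OF norm_sum]]])
      (simp add: norm_mult mult_ac)
  also have "\<dots> \<le> (\<Sum>r<k. \<Sum>c<k. cmod (R $$ (r,c)) * vec_norm2 u)"
    by (intro sum_mono mult_left_mono entry_le) auto
  finally show ?thesis
    by (simp add: sum_distrib_right)
qed

lemma vec_norm2_unit_vec:
  assumes "i < k"
  shows "vec_norm2 (unit_vec k i) = 1"
proof -
  have "vec_norm2 (unit_vec k i) = (\<Sum>r<k. if r = i then 1 else 0)"
    unfolding vec_norm2_def by (rule sum.cong) (auto simp: unit_vec_def)
  then show ?thesis using assms by simp
qed

lemma sum_if_const_cond: "(\<Sum>c\<in>A. if P then g c else 0) = (if P then sum g A else 0)"
  by simp

lemma qform_unit_vec: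
  assumes "R \<in> carrier_mat k k" "i < k"
  shows "qform R (unit_vec k i) = R $$ (i,i)"
proof -
  have "qform R (unit_vec k i) = (\<Sum>r<k. \<Sum>c<k. if r = i then if c = i then R $$ (r,c) else 0 else 0)"
    using assms by (auto simp: qform_expand unit_vec_def intro!: sum.cong)
  then show ?thesis
    using assms by (simp add: sum_if_const_cond)
qed

section \<open>A randomization procedure of entropy \<open>n\<close>\<close>

lemma mixture_kron:
  assumes A: "A \<in> carrier_mat a a" and B: "B \<in> carrier_mat b b"
    and V: "\<And>i. i < M \<Longrightarrow> V i \<in> carrier_mat a a" and W: "\<And>j. j < N \<Longrightarrow> W j \<in> carrier_mat b b"
  shows "mixture (a*b) (M*N) (\<lambda>l. p (l div N) * q (l mod N)) (\<lambda>l. kron_mat (V (l div N)) (W (l mod N)))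
           (kron_mat A B)
       = kron_mat (mixture a M p V A) (mixture b N q W B)"
proof (rule eq_matI)
  fix r c assume "r < dim_row (kron_mat (mixture a M p V A) (mixture b N q W B))"
    "c < dim_col (kron_mat (mixture a M p V A) (mixture b N q W B))"
  then have r: "r < a*b" and c: "c < a*b" by (simp_all add: mixture_def)
  note rc = div_mod_less_mult[OF r] div_mod_less_mult[OF c]
  let ?VA = "\<lambda>i. V i * A * mat_adjoint (V i)" and ?WB = "\<lambda>j. W j * B * mat_adjoint (W j)"
  have VA: "?VA i \<in> carrier_mat a a" if "i < M" for i
    using V[OF that] A by (meson mult_carrier_mat mat_adjoint_carrier)
  have WB: "?WB j \<in> carrier_mat b b" if "j < N" for j
    using W[OF that] B by (meson mult_carrier_mat mat_adjoint_carrier)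
  have "mixture (a*b) (M*N) (\<lambda>l. p (l div N) * q (l mod N)) (\<lambda>l. kron_mat (V (l div N)) (W (l mod N)))
           (kron_mat A B) $$ (r,c)
      = (\<Sum>l<M*N. complex_of_real (p (l div N) * q (l mod N))
           * kron_mat (?VA (l div N)) (?WB (l mod N)) $$ (r,c))"
    unfolding mixture_index[OF r c]
    by (intro sum.cong refl) (simp add: kron_mat_conjugate[OF A B V W] div_mod_less_mult)
  also have "\<dots> = (\<Sum>l<M*N. (complex_of_real (p (l div N)) * ?VA (l div N) $$ (r div b, c div b))
                      * (complex_of_real (q (l mod N)) * ?WB (l mod N) $$ (r mod b, c mod b)))"
  proof (intro sum.cong refl)
    fix l assume "l \<in> {..<M*N}"
    then have "l div N < M" "l mod N < N" by (simp_all add: div_mod_less_mult)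
    then show "complex_of_real (p (l div N) * q (l mod N)) * kron_mat (?VA (l div N)) (?WB (l mod N)) $$ (r,c)
      = (complex_of_real (p (l div N)) * ?VA (l div N) $$ (r div b, c div b))
        * (complex_of_real (q (l mod N)) * ?WB (l mod N) $$ (r mod b, c mod b))"
      using r c carrier_matD[OF VA] carrier_matD[OF WB] by simp
  qed
  also have "\<dots> = mixture a M p V A $$ (r div b, c div b) * mixture b N q W B $$ (r mod b, c mod b)"
    by (simp add: sum_mult_div_mod[where f = "\<lambda>i j. (complex_of_real (p i) * ?VA i $$ (r div b, c div b))
                      * (complex_of_real (q j) * ?WB j $$ (r mod b, c mod b))"]
        sum_product mixture_index rc)
  also have "\<dots> = kron_mat (mixture a M p V A) (mixture b N q W B) $$ (r,c)"
    using r c by (simp add: mixture_def)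
  finally show "mixture (a*b) (M*N) (\<lambda>l. p (l div N) * q (l mod N)) (\<lambda>l. kron_mat (V (l div N)) (W (l mod N)))
           (kron_mat A B) $$ (r,c) = kron_mat (mixture a M p V A) (mixture b N q W B) $$ (r,c)" .
qed (simp_all add: mixture_def)

definition rot90 :: "complex mat" where
  "rot90 = mat 2 2 (\<lambda>(i,j). if i = 0 \<and> j = 1 then -1 else if i = 1 \<and> j = 0 then 1 else 0)"

definition twirl_gate :: "nat \<Rightarrow> complex mat" where
  "twirl_gate t = (if t = 0 then 1\<^sub>m 2 else rot90)"

fun twirl_unitary :: "nat \<Rightarrow> nat \<Rightarrow> complex mat" where
  "twirl_unitary 0 i = 1\<^sub>m 1"
| "twirl_unitary (Suc n) i = kron_mat (twirl_gate (i div 2^n)) (twirl_unitary n (i mod 2^n))"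

definition maximally_mixed :: "nat \<Rightarrow> complex mat" where
  "maximally_mixed k = mat (2^k) (2^k) (\<lambda>(i,j). if i = j then 1 / 2^k else 0)"

lemma rot90_carrier [simp]: "rot90 \<in> carrier_mat 2 2"
  by (simp add: rot90_def carrier_matI)

lemma rot90_unitary: "mat_adjoint rot90 * rot90 = 1\<^sub>m 2"
proof (rule eq_matI)
  fix i j assume "i < dim_row (1\<^sub>m 2 :: complex mat)" "j < dim_col (1\<^sub>m 2 :: complex mat)"
  then have i: "i < 2" and j: "j < 2" by simp_all
  show "(mat_adjoint rot90 * rot90) $$ (i,j) = 1\<^sub>m 2 $$ (i,j)"
    unfolding index_mult_mat_sum[OF mat_adjoint_carrier[OF rot90_carrier] rot90_carrier i j]
    using i j by (auto simp: numeral_2_eq_2 less_Suc_eq rot90_def)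
qed (simp_all add: rot90_def)

lemma rot90_mult_vec:
  "rot90 *\<^sub>v vec_of_list [c, s] = vec_of_list [- s, c]"
  by (intro eq_vecI) (auto simp: rot90_def scalar_prod_def less_2_cases_iff vec_of_list_index
      numeral_2_eq_2 simp del: vec_of_list_Cons)

lemma proj_add_proj_rot90:
  assumes "c\<^sup>2 + s\<^sup>2 = (1::real)"
  shows "proj (vec_of_list [complex_of_real c, complex_of_real s])
       + proj (vec_of_list [- complex_of_real s, complex_of_real c]) = 1\<^sub>m 2"
proof -
  have "complex_of_real c * complex_of_real c + complex_of_real s * complex_of_real s = 1"
    using assms by (simp flip: of_real_mult of_real_add add: power2_eq_square)
  then show ?thesis
    by (intro eq_matI) (auto simp: less_2_cases_iff vec_of_list_index algebra_simps
        simp del: vec_of_list_Cons)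
qed

lemma twirl_gate_carrier [simp]: "twirl_gate t \<in> carrier_mat 2 2"
  by (simp add: twirl_gate_def)

lemma twirl_gate_unitary: "mat_adjoint (twirl_gate t) * twirl_gate t = 1\<^sub>m 2"
  by (simp add: twirl_gate_def rot90_unitary)

lemma twirl_unitary_carrier [simp]: "twirl_unitary n i \<in> carrier_mat (2^n) (2^n)"
  by (induction n arbitrary: i) simp_all

lemma twirl_unitary_unitary: "mat_adjoint (twirl_unitary n i) * twirl_unitary n i = 1\<^sub>m (2^n)"
proof (induction n arbitrary: i)
  case (Suc n)
  let ?g = "twirl_gate (i div 2^n)" and ?u = "twirl_unitary n (i mod 2^n)"
  have "mat_adjoint (twirl_unitary (Suc n) i) * twirl_unitary (Suc n) i
      = kron_mat (mat_adjoint ?g * ?g) (mat_adjoint ?u * ?u)"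
    by (simp add: kron_mat_adjoint[of _ 2 2 _ "2^n" "2^n"] kron_mat_mult[of _ 2 2 _ "2^n" "2^n" _ 2 _ "2^n"])
  then show ?case
    by (simp add: twirl_gate_unitary Suc.IH kron_mat_one)
qed simp

lemma maximally_mixed_carrier [simp]: "maximally_mixed k \<in> carrier_mat (2^k) (2^k)"
  by (simp add: maximally_mixed_def carrier_matI)

lemma qform_maximally_mixed:
  assumes v: "v \<in> carrier_vec (2^k)"
  shows "qform (maximally_mixed k) v = complex_of_real (vec_norm2 v / 2^k)"
proof -
  have "qform (maximally_mixed k) v
      = (\<Sum>r<2^k. \<Sum>c<2^k. if c = r then 1 / 2^k * (v $ c * cnj (v $ r)) else 0)"
    unfolding qform_expand[OF maximally_mixed_carrier v]
    by (intro sum.cong refl) (auto simp: maximally_mixed_def)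
  also have "\<dots> = 1 / 2^k * (conjugate v \<bullet> v)"
    using v by (simp add: scalar_prod_def atLeast0LessThan sum_distrib_left mult.commute)
  finally show ?thesis
    by (simp add: conjugate_scalar_prod_self)
qed

lemma density_mat_maximally_mixed: "density_mat k (maximally_mixed k)"
  unfolding density_mat_def
proof (intro conjI ballI)
  show "mat_adjoint (maximally_mixed k) = maximally_mixed k"
    by (intro eq_matI) (auto simp: maximally_mixed_def)
  show "mat_trace (maximally_mixed k) = 1"
    by (simp add: mat_trace_def maximally_mixed_def)
  fix v :: "complex vec" assume "v \<in> carrier_vec (2^k)"
  then show "qform (maximally_mixed k) v \<in> \<real>" "0 \<le> Re (qform (maximally_mixed k) v)"
    by (simp_all add: qform_maximally_mixed vec_norm2_nonneg)
qed simp

lemma kron_maximally_mixed: "kron_mat (maximally_mixed a) (maximally_mixed b) = maximally_mixed (a + b)"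
proof (rule eq_matI)
  fix i j assume "i < dim_row (maximally_mixed (a + b))" "j < dim_col (maximally_mixed (a + b))"
  then have "i < 2^a * 2^b" "j < 2^a * 2^b"
    by (simp_all add: maximally_mixed_def power_add)
  moreover have "(i div 2^b = j div 2^b \<and> i mod 2^b = j mod 2^b) \<longleftrightarrow> i = j"
    by (metis div_mult_mod_eq)
  ultimately show "kron_mat (maximally_mixed a) (maximally_mixed b) $$ (i,j) = maximally_mixed (a + b) $$ (i,j)"
    by (auto simp: maximally_mixed_def div_mod_less_mult power_add)
qed (simp_all add: maximally_mixed_def power_add)

lemma kron_mat_maximally_mixed_0: "P \<in> carrier_mat a b \<Longrightarrow> kron_mat P (maximally_mixed 0) = P"
  by (intro eq_matI) (auto simp: maximally_mixed_def)

lemma B_states_carrier: "b \<in> B_states \<Longrightarrow> b \<in> carrier_vec 2"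
  by (auto simp: B_states_def intro!: carrier_vecI simp del: vec_of_list_Cons)

lemma tensor_list_carrier: "set bs \<subseteq> carrier_vec 2 \<Longrightarrow> tensor_list bs \<in> carrier_vec (2 ^ length bs)"
  by (induction bs) auto

lemma mixture_twirl_gate_proj:
  assumes "b \<in> B_states"
  shows "mixture 2 2 (\<lambda>_. 1/2) twirl_gate (proj b) = maximally_mixed 1"
proof (rule eq_matI)
  obtain \<theta> where b: "b = vec_of_list [complex_of_real (cos \<theta>), complex_of_real (sin \<theta>)]"
    using assms by (auto simp: B_states_def)
  have b2: "b \<in> carrier_vec 2"
    by (rule B_states_carrier[OF assms])
  have gate: "twirl_gate t * proj b * mat_adjoint (twirl_gate t)
      = (if t = 0 then proj b else proj (rot90 *\<^sub>v b))" for t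
    using proj_conjugate[OF twirl_gate_carrier b2, of t] b2 by (simp add: twirl_gate_def)
  have sum: "proj b + proj (rot90 *\<^sub>v b) = 1\<^sub>m 2"
    unfolding b rot90_mult_vec by (rule proj_add_proj_rot90[OF sin_cos_squared_add2])
  fix i j assume "i < dim_row (maximally_mixed 1)" "j < dim_col (maximally_mixed 1)"
  then have i: "i < 2" and j: "j < 2" by (simp_all add: maximally_mixed_def)
  have "mixture 2 2 (\<lambda>_. 1/2) twirl_gate (proj b) $$ (i,j)
      = 1/2 * proj b $$ (i,j) + 1/2 * proj (rot90 *\<^sub>v b) $$ (i,j)"
    unfolding mixture_index[OF i j] gate by (simp add: numeral_2_eq_2)
  also have "\<dots> = 1/2 * (proj b + proj (rot90 *\<^sub>v b)) $$ (i,j)"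
    using b2 i j carrier_matD[OF rot90_carrier] by (simp add: algebra_simps)
  also have "\<dots> = maximally_mixed 1 $$ (i,j)"
    unfolding sum using i j by (simp add: maximally_mixed_def)
  finally show "mixture 2 2 (\<lambda>_. 1/2) twirl_gate (proj b) $$ (i,j) = maximally_mixed 1 $$ (i,j)" .
qed (simp_all add: mixture_def maximally_mixed_def)

lemma mixture_twirl_tensor_list:
  assumes "set bs \<subseteq> B_states"
  shows "mixture (2 ^ length bs) (2 ^ length bs) (\<lambda>_. 1 / 2 ^ length bs) (twirl_unitary (length bs))
           (proj (tensor_list bs))
       = maximally_mixed (length bs)"
  using assms
proof (induction bs)
  case Nil
  show ?case
    by (intro eq_matI) (auto simp: mixture_def maximally_mixed_def)
next
  case (Cons b bs)
  let ?n = "length bs"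
  have b: "b \<in> B_states" and bs: "set bs \<subseteq> B_states"
    using Cons.prems by simp_all
  have "tensor_list bs \<in> carrier_vec (2^?n)"
    using bs B_states_carrier by (intro tensor_list_carrier) auto
  then have \<phi>: "proj (tensor_list bs) \<in> carrier_mat (2^?n) (2^?n)"
    by (rule proj_carrier)
  have unitaries: "twirl_unitary (Suc ?n)
      = (\<lambda>l. kron_mat (twirl_gate (l div 2^?n)) (twirl_unitary ?n (l mod 2^?n)))"
    by (rule ext) simp
  have "mixture (2 ^ length (b # bs)) (2 ^ length (b # bs)) (\<lambda>_. 1 / 2 ^ length (b # bs))
          (twirl_unitary (length (b # bs))) (proj (tensor_list (b # bs)))
      = mixture (2 * 2^?n) (2 * 2^?n) (\<lambda>l. (\<lambda>_. 1/2) (l div 2^?n) * (\<lambda>_. 1 / 2^?n) (l mod 2^?n))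
          (\<lambda>l. kron_mat (twirl_gate (l div 2^?n)) (twirl_unitary ?n (l mod 2^?n)))
          (kron_mat (proj b) (proj (tensor_list bs)))"
    by (simp add: unitaries proj_kron_vec)
  also have "\<dots> = kron_mat (mixture 2 2 (\<lambda>_. 1/2) twirl_gate (proj b))
      (mixture (2^?n) (2^?n) (\<lambda>_. 1 / 2^?n) (twirl_unitary ?n) (proj (tensor_list bs)))"
    by (rule mixture_kron[where p = "\<lambda>_. 1/2" and q = "\<lambda>_. 1 / 2^?n" and V = twirl_gate
          and W = "twirl_unitary ?n", OF proj_carrier[OF B_states_carrier[OF b]] \<phi>]) simp_all
  also have "\<dots> = maximally_mixed (length (b # bs))"
    using kron_maximally_mixed[of 1 ?n] by (simp add: mixture_twirl_gate_proj[OF b] Cons.IH[OF bs])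
  finally show ?case .
qed

lemma twirl_randomization_procedure:
  "randomization_procedure n (B_tensor n) n (2^n) (\<lambda>_. 1 / 2^n) (twirl_unitary n)
     (maximally_mixed 0) (maximally_mixed n)"
  unfolding randomization_procedure_def
proof (intro conjI allI impI ballI)
  fix \<phi> assume "\<phi> \<in> B_tensor n"
  then obtain bs where \<phi>: "\<phi> = tensor_list bs" and bs: "length bs = n" "set bs \<subseteq> B_states"
    by (auto simp: B_tensor_def)
  have "tensor_list bs \<in> carrier_vec (2^n)"
    using tensor_list_carrier[of bs] bs B_states_carrier by auto
  then have "proj \<phi> \<in> carrier_mat (2^n) (2^n)"
    unfolding \<phi> by (rule proj_carrier)
  then show "mixture (2^n) (2^n) (\<lambda>_. 1 / 2^n) (twirl_unitary n) (kron_mat (proj \<phi>) (maximally_mixed 0))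
      = maximally_mixed n"
    using mixture_twirl_tensor_list[OF bs(2)] by (simp add: kron_mat_maximally_mixed_0 \<phi> bs(1))
qed (simp_all add: unitary_op_def twirl_unitary_unitary density_mat_maximally_mixed)

section \<open>The weights of a randomization procedure are at most \<open>2\<^sup>-\<^sup>n\<close>\<close>

text \<open>For Hermitian \<open>R\<close> this is the largest eigenvalue of \<open>R\<close>.\<close>

definition max_rayleigh :: "nat \<Rightarrow> complex mat \<Rightarrow> real" where
  "max_rayleigh k R = (SUP u \<in> {u \<in> carrier_vec k. vec_norm2 u \<noteq> 0}. Re (qform R u) / vec_norm2 u)"

lemma bdd_above_rayleigh:
  assumes "R \<in> carrier_mat k k"
  shows "bdd_above ((\<lambda>u. Re (qform R u) / vec_norm2 u) ` {u \<in> carrier_vec k. vec_norm2 u \<noteq> 0})"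
proof (rule bdd_aboveI2)
  fix u assume "u \<in> {u \<in> carrier_vec k. vec_norm2 u \<noteq> 0}"
  then have "u \<in> carrier_vec k" "vec_norm2 u > 0"
    using vec_norm2_nonneg[of u] by auto
  then show "Re (qform R u) / vec_norm2 u \<le> (\<Sum>r<k. \<Sum>c<k. cmod (R $$ (r,c)))"
    using Re_qform_le_sum_cmod[OF assms] by (simp add: divide_le_eq)
qed

lemma Re_qform_le_max_rayleigh:
  assumes R: "R \<in> carrier_mat k k" and u: "u \<in> carrier_vec k"
  shows "Re (qform R u) \<le> max_rayleigh k R * vec_norm2 u"
proof (cases "vec_norm2 u = 0")
  case True
  then have "u = 0\<^sub>v k" using vec_norm2_eq_0D u by (metis carrier_vecD)
  then show ?thesis using R True by simp
next
  case False
  then have "Re (qform R u) / vec_norm2 u \<le> max_rayleigh k R"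
    unfolding max_rayleigh_def using u by (intro cSUP_upper bdd_above_rayleigh[OF R]) auto
  moreover have "vec_norm2 u > 0" using False vec_norm2_nonneg[of u] by linarith
  ultimately show ?thesis by (simp add: divide_le_eq)
qed

lemma max_rayleigh_le:
  assumes "0 < k" and le: "\<And>u. u \<in> carrier_vec k \<Longrightarrow> Re (qform R u) \<le> c * vec_norm2 u"
  shows "max_rayleigh k R \<le> c"
  unfolding max_rayleigh_def
proof (rule cSUP_least)
  show "{u \<in> carrier_vec k. vec_norm2 u \<noteq> 0} \<noteq> {}"
    using vec_norm2_unit_vec[OF \<open>0 < k\<close>] unit_vec_carrier by fastforce
  fix u assume "u \<in> {u \<in> carrier_vec k. vec_norm2 u \<noteq> 0}"
  then have "u \<in> carrier_vec k" "vec_norm2 u > 0"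
    using vec_norm2_nonneg[of u] by auto
  then show "Re (qform R u) / vec_norm2 u \<le> c"
    using le by (simp add: divide_le_eq)
qed

lemma density_mat_max_rayleigh_pos:
  assumes "density_mat j \<rho>"
  shows "max_rayleigh (2^j) \<rho> > 0"
proof -
  have \<rho>: "\<rho> \<in> carrier_mat (2^j) (2^j)" and tr: "(\<Sum>i<2^j. \<rho> $$ (i,i)) = 1"
    using assms by (auto simp: density_mat_def mat_trace_def)
  have "(\<Sum>i<2^j. Re (\<rho> $$ (i,i))) = 1"
    using arg_cong[OF tr, of Re] by (simp add: Re_sum)
  then have "\<exists>i<2^j. Re (\<rho> $$ (i,i)) > 0"
    using sum_nonpos[of "{..<2^j}" "\<lambda>i. Re (\<rho> $$ (i,i))"] by (force simp: not_less)
  then obtain i where i: "i < 2^j" and pos: "Re (\<rho> $$ (i,i)) > 0"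
    by blast
  have "Re (\<rho> $$ (i,i)) \<le> max_rayleigh (2^j) \<rho>"
    using Re_qform_le_max_rayleigh[OF \<rho> unit_vec_carrier[of "2^j" i]]
    by (simp add: qform_unit_vec[OF \<rho> i] vec_norm2_unit_vec[OF i])
  with pos show ?thesis by linarith
qed

text \<open>For \<open>w \<in> \<complex>\<^sup>d \<otimes> \<complex>\<^sup>k\<close>, \<open>vec_block k x w\<close> is the partial inner product of \<open>w\<close> with \<open>|x\<rangle>\<close>
  on the first factor.\<close>

definition vec_block :: "nat \<Rightarrow> nat \<Rightarrow> complex vec \<Rightarrow> complex vec" where
  "vec_block k x w = vec k (\<lambda>j. w $ (x*k + j))"

lemma vec_block_carrier [simp]: "vec_block k x w \<in> carrier_vec k"
  by (simp add: vec_block_def)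

lemma vec_norm2_blocks:
  "w \<in> carrier_vec (d*k) \<Longrightarrow> (\<Sum>x<d. vec_norm2 (vec_block k x w)) = vec_norm2 w"
  by (simp add: vec_norm2_def vec_block_def sum_mult_split[of _ d k])

lemma qform_kron_proj_unit_vec:
  fixes R :: "complex mat"
  assumes R: "R \<in> carrier_mat k k" and x: "x < d" and w: "w \<in> carrier_vec (d*k)"
  shows "qform (kron_mat (proj (unit_vec d x)) R) w = qform R (vec_block k x w)"
proof -
  let ?K = "kron_mat (proj (unit_vec d x)) R"
  have K: "?K \<in> carrier_mat (d*k) (d*k)"
    using R by (intro kron_mat_carrier proj_carrier unit_vec_carrier)
  have entry: "?K $$ (i*k + r, j*k + c) = (if i = x then if j = x then R $$ (r,c) else 0 else 0)"
    if "i < d" "r < k" "j < d" "c < k" for i r j c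
    using that R by (simp add: unit_vec_def mult_add_less_mult)
  have "qform ?K w = (\<Sum>i<d. \<Sum>r<k. \<Sum>j<d. \<Sum>c<k.
      cnj (w $ (i*k + r)) * ?K $$ (i*k + r, j*k + c) * w $ (j*k + c))"
    by (simp add: qform_expand[OF K w] sum_mult_split[of _ d k])
  also have "\<dots> = (\<Sum>i<d. \<Sum>r<k. \<Sum>j<d. \<Sum>c<k.
      if i = x then if j = x then cnj (w $ (x*k + r)) * R $$ (r,c) * w $ (x*k + c) else 0 else 0)"
    by (intro sum.cong refl) (simp add: entry)
  also have "\<dots> = (\<Sum>r<k. \<Sum>c<k. cnj (w $ (x*k + r)) * R $$ (r,c) * w $ (x*k + c))"
    using x by (simp add: sum_if_const_cond)
  also have "\<dots> = qform R (vec_block k x w)"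
    unfolding qform_expand[OF R vec_block_carrier] by (simp add: vec_block_def)
  finally show ?thesis .
qed

definition vec_pad :: "nat \<Rightarrow> complex vec \<Rightarrow> complex vec" where
  "vec_pad D u = vec D (\<lambda>r. if r < dim_vec u then u $ r else 0)"

lemma vec_pad_carrier [simp]: "vec_pad D u \<in> carrier_vec D"
  by (simp add: vec_pad_def)

lemma vec_block_0_pad: "u \<in> carrier_vec k \<Longrightarrow> k \<le> D \<Longrightarrow> vec_block k 0 (vec_pad D u) = u"
  by (intro eq_vecI) (auto simp: vec_block_def vec_pad_def)

lemma vec_norm2_pad:
  assumes "dim_vec u \<le> D"
  shows "vec_norm2 (vec_pad D u) = vec_norm2 u"
proof -
  have "vec_norm2 (vec_pad D u) = (\<Sum>r<dim_vec u. (cmod (vec_pad D u $ r))\<^sup>2)"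
    unfolding vec_norm2_def using assms by (intro sum.mono_neutral_right) (auto simp: vec_pad_def)
  also have "\<dots> = vec_norm2 u"
    unfolding vec_norm2_def using assms by (intro sum.cong) (auto simp: vec_pad_def)
  finally show ?thesis .
qed

locale basis_randomizer =
  fixes d k N :: nat and p :: "nat \<Rightarrow> real" and U :: "nat \<Rightarrow> complex mat" and \<rho>a \<rho>0 :: "complex mat"
  assumes p_nonneg: "\<And>j. j < N \<Longrightarrow> 0 \<le> p j" and p_sum: "(\<Sum>j<N. p j) = 1"
    and U_carrier: "\<And>j. j < N \<Longrightarrow> U j \<in> carrier_mat (d*k) (d*k)"
    and U_unitary: "\<And>j. j < N \<Longrightarrow> mat_adjoint (U j) * U j = 1\<^sub>m (d*k)"
    and \<rho>a_carrier: "\<rho>a \<in> carrier_mat k k"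
    and \<rho>a_psd: "\<And>u. u \<in> carrier_vec k \<Longrightarrow> 0 \<le> Re (qform \<rho>a u)"
    and output_eq: "\<And>x. x < d \<Longrightarrow> mixture (d*k) N p U (kron_mat (proj (unit_vec d x)) \<rho>a) = \<rho>0"
begin

lemma Re_qform_output:
  assumes x: "x < d" and v: "v \<in> carrier_vec (d*k)"
  shows "Re (qform \<rho>0 v) = (\<Sum>j<N. p j * Re (qform \<rho>a (vec_block k x (mat_adjoint (U j) *\<^sub>v v))))"
proof -
  have K: "kron_mat (proj (unit_vec d x)) \<rho>a \<in> carrier_mat (d*k) (d*k)"
    using \<rho>a_carrier by simp
  have "qform \<rho>0 v = (\<Sum>j<N. complex_of_real (p j)
      * qform (kron_mat (proj (unit_vec d x)) \<rho>a) (mat_adjoint (U j) *\<^sub>v v))"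
    unfolding output_eq[OF x, symmetric] by (rule qform_mixture[OF K U_carrier v])
  also have "\<dots> = (\<Sum>j<N. complex_of_real (p j) * qform \<rho>a (vec_block k x (mat_adjoint (U j) *\<^sub>v v)))"
    by (intro sum.cong refl arg_cong2[where f = "(*)"] qform_kron_proj_unit_vec[OF \<rho>a_carrier x]
        mult_mat_vec_carrier[OF mat_adjoint_carrier[OF U_carrier] v]) simp
  finally show ?thesis by (simp add: Re_sum)
qed

lemma Re_qform_output_le:
  assumes v: "v \<in> carrier_vec (d*k)"
  shows "real d * Re (qform \<rho>0 v) \<le> max_rayleigh k \<rho>a * vec_norm2 v"
proof -
  let ?M = "max_rayleigh k \<rho>a" and ?w = "\<lambda>j. mat_adjoint (U j) *\<^sub>v v"
  have w: "?w j \<in> carrier_vec (d*k)" if "j < N" for j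
    using mult_mat_vec_carrier[OF mat_adjoint_carrier[OF U_carrier[OF that]] v] .
  have "real d * Re (qform \<rho>0 v) = (\<Sum>x<d. Re (qform \<rho>0 v))"
    by simp
  also have "\<dots> = (\<Sum>x<d. \<Sum>j<N. p j * Re (qform \<rho>a (vec_block k x (?w j))))"
    by (intro sum.cong refl Re_qform_output[OF _ v]) simp
  also have "\<dots> \<le> (\<Sum>x<d. \<Sum>j<N. p j * (?M * vec_norm2 (vec_block k x (?w j))))"
    by (intro sum_mono mult_left_mono Re_qform_le_max_rayleigh[OF \<rho>a_carrier] vec_block_carrier
        p_nonneg) simp
  also have "\<dots> = (\<Sum>j<N. p j * ?M * (\<Sum>x<d. vec_norm2 (vec_block k x (?w j))))"
    by (subst sum.swap) (simp add: sum_distrib_left mult.assoc)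
  also have "\<dots> = (\<Sum>j<N. p j * ?M * vec_norm2 v)"
  proof (intro sum.cong refl)
    fix j assume "j \<in> {..<N}"
    then have j: "j < N" by simp
    have "mat_adjoint (mat_adjoint (U j)) * mat_adjoint (U j) = 1\<^sub>m (d*k)"
      using unitary_mult_adjoint[OF U_carrier[OF j] U_unitary[OF j]] by simp
    then show "p j * ?M * (\<Sum>x<d. vec_norm2 (vec_block k x (?w j))) = p j * ?M * vec_norm2 v"
      by (simp add: vec_norm2_blocks[OF w[OF j]] vec_norm2_unitary[OF mat_adjoint_carrier[OF U_carrier[OF j]] _ v])
  qed
  also have "\<dots> = ?M * vec_norm2 v"
    using p_sum by (simp flip: sum_distrib_right)
  finally show ?thesis .
qed

lemma weight_mult_Re_qform_le:
  assumes i: "i < N" and u: "u \<in> carrier_vec k" and "0 < d"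
  shows "p i * Re (qform \<rho>a u) \<le> Re (qform \<rho>0 (U i *\<^sub>v vec_pad (d*k) u))"
proof -
  let ?v = "U i *\<^sub>v vec_pad (d*k) u"
  have v: "?v \<in> carrier_vec (d*k)"
    using mult_mat_vec_carrier[OF U_carrier[OF i] vec_pad_carrier] .
  have "vec_block k 0 (mat_adjoint (U i) *\<^sub>v ?v) = u"
    using \<open>0 < d\<close> u by (simp add: unitary_cancel_left[OF U_carrier[OF i] U_unitary[OF i]] vec_block_0_pad)
  then have "p i * Re (qform \<rho>a u) = p i * Re (qform \<rho>a (vec_block k 0 (mat_adjoint (U i) *\<^sub>v ?v)))"
    by simp
  also have "\<dots> \<le> (\<Sum>j<N. p j * Re (qform \<rho>a (vec_block k 0 (mat_adjoint (U j) *\<^sub>v ?v))))"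
    using i by (intro member_le_sum mult_nonneg_nonneg p_nonneg \<rho>a_psd vec_block_carrier) auto
  also have "\<dots> = Re (qform \<rho>0 ?v)"
    using Re_qform_output[OF \<open>0 < d\<close> v] by simp
  finally show ?thesis .
qed

lemma weight_le:
  assumes i: "i < N" and "0 < d" "0 < k" and pos: "0 < max_rayleigh k \<rho>a"
  shows "p i \<le> 1 / d"
proof (cases "p i = 0")
  case False
  let ?M = "max_rayleigh k \<rho>a"
  have pi: "p i > 0" using False p_nonneg[OF i] by simp
  have "Re (qform \<rho>a u) \<le> ?M / (d * p i) * vec_norm2 u" if u: "u \<in> carrier_vec k" for u
  proof -
    let ?v = "U i *\<^sub>v vec_pad (d*k) u"
    have "real d * (p i * Re (qform \<rho>a u)) \<le> real d * Re (qform \<rho>0 ?v)"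
      by (rule mult_left_mono[OF weight_mult_Re_qform_le[OF i u \<open>0 < d\<close>]]) simp
    also have "\<dots> \<le> ?M * vec_norm2 ?v"
      by (rule Re_qform_output_le[OF mult_mat_vec_carrier[OF U_carrier[OF i] vec_pad_carrier]])
    also have "vec_norm2 ?v = vec_norm2 u"
      using u \<open>0 < d\<close> by (simp add: vec_norm2_unitary[OF U_carrier[OF i] U_unitary[OF i]] vec_norm2_pad)
    finally show ?thesis
      using pi \<open>0 < d\<close> by (simp add: field_simps)
  qed
  then have "?M \<le> ?M / (d * p i)"
    by (rule max_rayleigh_le[OF \<open>0 < k\<close>])
  then show ?thesis
    using pos pi \<open>0 < d\<close> by (simp add: field_simps)
qed simp

end

lemma randomization_procedure_weight_le:
  assumes rp: "randomization_procedure n S m N p U \<rho>a \<rho>0"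
    and basis: "\<And>x. x < 2^n \<Longrightarrow> unit_vec (2^n) x \<in> S" and i: "i < N"
  shows "p i \<le> 1 / 2^n"
proof -
  have dim: "(2::nat)^m = 2^n * 2^(m-n)"
    using rp by (simp add: randomization_procedure_def flip: power_add)
  have \<rho>a: "density_mat (m-n) \<rho>a"
    using rp by (simp add: randomization_procedure_def)
  interpret basis_randomizer "2^n" "2^(m-n)" N p U \<rho>a \<rho>0
    using rp basis \<rho>a
    by unfold_locales (auto simp: randomization_procedure_def unitary_op_def density_mat_def simp flip: dim)
  have "p i \<le> 1 / real (2^n)"
    by (rule weight_le[OF i]) (simp_all add: density_mat_max_rayleigh_pos[OF \<rho>a])
  then show ?thesis by simp
qed

lemma unit_vec_mem_B_states:
  assumes "t < 2"
  shows "unit_vec 2 t \<in> B_states"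
proof -
  define \<theta> where "\<theta> = (if t = 0 then 0 else pi/2)"
  have "unit_vec 2 t = vec_of_list [complex_of_real (cos \<theta>), complex_of_real (sin \<theta>)]"
    using assms by (intro eq_vecI)
      (auto simp: \<theta>_def unit_vec_def less_2_cases_iff vec_of_list_index nth_Cons' simp del: vec_of_list_Cons)
  moreover have "0 \<le> \<theta> \<and> \<theta> < 2*pi"
    using pi_gt_zero by (simp add: \<theta>_def)
  ultimately show ?thesis
    unfolding B_states_def by blast
qed

lemma kron_vec_mem_B_tensor:
  assumes "b \<in> B_states" "\<phi> \<in> B_tensor n"
  shows "kron_vec b \<phi> \<in> B_tensor (Suc n)"
proof -
  obtain bs where "\<phi> = tensor_list bs" "length bs = n" "set bs \<subseteq> B_states"
    using assms(2) by (auto simp: B_tensor_def)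
  then show ?thesis
    unfolding B_tensor_def using assms(1) by (intro CollectI exI[of _ "b # bs"]) simp
qed

lemma unit_vec_mem_B_tensor: "x < 2^n \<Longrightarrow> unit_vec (2^n) x \<in> B_tensor n"
proof (induction n arbitrary: x)
  case 0
  then show ?case by (auto simp: B_tensor_def unit_vec_def intro!: exI[of _ "[]"])
next
  case (Suc n)
  have x: "x div 2^n < 2" "x mod 2^n < 2^n"
    using Suc.prems by (simp_all add: less_mult_imp_div_less)
  have "unit_vec (2^Suc n) x = kron_vec (unit_vec 2 (x div 2^n)) (unit_vec (2^n) (x mod 2^n))"
    using kron_vec_unit_vec[OF x] by (simp add: div_mult_mod_eq)
  then show ?case
    using kron_vec_mem_B_tensor[OF unit_vec_mem_B_states Suc.IH] x by simp
qed

lemma shannon_ge_neg_log: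
  assumes nonneg: "\<And>i. i < N \<Longrightarrow> 0 \<le> p i" and le: "\<And>i. i < N \<Longrightarrow> p i \<le> b" and "0 < b"
    and sum: "(\<Sum>i<N. p i) = 1"
  shows "- log 2 b \<le> shannon N p"
proof -
  have summand_le: "p i * - log 2 b \<le> - (if p i = 0 then 0 else p i * log 2 (p i))" if i: "i < N" for i
  proof (cases "p i = 0")
    case False
    then have "0 < p i" using nonneg[OF i] by simp
    then have "log 2 (p i) \<le> log 2 b" using le[OF i] by simp
    then show ?thesis using \<open>0 < p i\<close> False by (simp add: mult_left_mono)
  qed simp
  have "- log 2 b = (\<Sum>i<N. p i * - log 2 b)"
    by (simp only: sum_distrib_right[symmetric] sum mult_1)
  also have "\<dots> \<le> shannon N p"
    unfolding shannon_def sum_negf[symmetric] by (intro sum_mono summand_le) simp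
  finally show ?thesis .
qed

lemma shannon_uniform: "0 < N \<Longrightarrow> shannon N (\<lambda>_. 1 / N) = log 2 N"
  by (simp add: shannon_def log_divide)

theorem corollary11:
  fixes n :: nat
  assumes "n \<ge> 1"
  shows "(\<exists>m N p U \<rho>a \<rho>0. randomization_procedure n (B_tensor n) m N p U \<rho>a \<rho>0
             \<and> shannon N p = real n)
       \<and> (\<forall>m N p U \<rho>a \<rho>0. randomization_procedure n (B_tensor n) m N p U \<rho>a \<rho>0
             \<longrightarrow> shannon N p \<ge> real n)"
proof (intro conjI allI impI)
  have "shannon (2^n) (\<lambda>_. 1 / 2^n) = real n"
    using shannon_uniform[of "2^n"] by (simp add: log_nat_power)
  then show "\<exists>m N p U \<rho>a \<rho>0. randomization_procedure n (B_tensor n) m N p U \<rho>a \<rho>0 \<and> shannon N p = real n"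
    using twirl_randomization_procedure by blast
next
  fix m N p U \<rho>a \<rho>0
  assume rp: "randomization_procedure n (B_tensor n) m N p U \<rho>a \<rho>0"
  have "- log 2 (1 / 2^n) \<le> shannon N p"
    using rp randomization_procedure_weight_le[OF rp unit_vec_mem_B_tensor]
    by (intro shannon_ge_neg_log) (auto simp: randomization_procedure_def)
  then show "real n \<le> shannon N p"
    by (simp add: log_divide log_nat_power)
qed

end
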